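(* Let $D\subset\mathbb{C}$ be an open disk centered at $0$, $f_1,\dots,f_p:D\to\mathbb{C}$ analytic, $A_1,\dots,A_p\in\mathbb{C}^{n\times n}$ with $M(\lambda)=\sum_{m=1}^p f_m(\lambda)A_m$ satisfying $M(\lambda)^T=M(\lambda)$ on $D$, and $M_j:=M^{(j)}(0)=\sum_{m=1}^pf_m^{(j)}(0)A_m$. Let $\mathbf{C}=[c_{i,j}]$ be the infinite matrix determined by $c_{i,1}=1/(i+1)$ ($i\ge1$) and $c_{i-1,j}=\frac{j}{i}c_{i,j-1}$ ($i,j>1$); let $\mathbf{S}$ be the infinite block matrix with $S_{1,1}=I$, $S_{1,j}=S_{j,1}=0$ ($j\ge2$), $S_{i,j}=c_{i-1,j-1}M_{i+j-2}$ ($i,j\ge2$); let $\mathbf{A}=\operatorname{diag}(-M_0,I,I,\dots)$; and let $\mathbf{B}$ have first block row $(M_1,\frac12M_2,\frac13M_3,\dots)$, blocks $\frac1jI$ in positions $(j+1,j)$, zeros elsewhere. $[\mathbf{X}]_N$ denotes the leading $N\times N$ block submatrix. Let $k+1\le N$, assume $[\mathbf{S}]_{2N}$ and $[\mathbf{S}\mathbf{A}]_N$ are invertible, let $q_k\in\mathbb{C}^{Nn}$ have only its first $k$ blocks (in $\mathbb{C}^n$) nonzero, and let $w=[\mathbf{S}\mathbf{A}]_N^{-1}[\mathbf{S}\mathbf{B}]_Nq_k$; only the first $k+1$ blocks of $w$ are nonzero, and let $W\in\mathbb{C}^{n\times(k+1)}$ have these blocks as columns. Let $z=[\mathbf{S}\mathbf{B}]_Nw$.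 Then the first $k+1$ blocks of $z$, forming the columns of $Z=[z_1,\dots,z_{k+1}]$, satisfy $$Z=\sum_{m=1}^pA_mW\,(G_{k+1}\circ F_m),$$ where $G_{k+1}\in\mathbb{R}^{(k+1)\times(k+1)}$ has entries $g_{j,1}=g_{1,j}=1/j$ for $j=1,\dots,k+1$ and $g_{i,j}=c_{i-1,j}/j$ for $i,j\ge2$, and $F_m\in\mathbb{C}^{(k+1)\times(k+1)}$ is the Hankel matrix with $(i,j)$ entry $f_m^{(i+j-1)}(0)$.
   Context: $\circ$ denotes the Hadamard (entrywise) product. Transpose is non-conjugate. *)

theory Defs
  imports "HOL-Complex_Analysis.Complex_Analysis" "Jordan_Normal_Form.Matrix"
begin

text \<open>Infinite (scalar) matrices are functions nat => nat => complex (0-based scalar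
 indices). Infinite block matrices with n x n blocks are given by a block function
 with 1-based block indices and converted to scalar form.\<close>

type_synonym imat = "nat \<Rightarrow> nat \<Rightarrow> complex"

definition blocks_to_imat :: "nat \<Rightarrow> (nat \<Rightarrow> nat \<Rightarrow> complex mat) \<Rightarrow> imat" where
  "blocks_to_imat n blk = (\<lambda>r s. blk (r div n + 1) (s div n + 1) $$ (r mod n, s mod n))"

definition imat_mult :: "imat \<Rightarrow> imat \<Rightarrow> imat" where
  "imat_mult X Y = (\<lambda>r s. infsum (\<lambda>l. X r l * Y l s) UNIV)"

definition lead :: "nat \<Rightarrow> nat \<Rightarrow> imat \<Rightarrow> complex mat" where
  "lead n N X = mat (N * n) (N * n) (\<lambda>(r, s). X r s)"

definition minv :: "complex mat \<Rightarrow> complex mat" where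
  "minv X = (SOME B. B \<in> carrier_mat (dim_row X) (dim_row X) \<and> inverts_mat X B \<and> inverts_mat B X)"

definition hadamard :: "'a::times mat \<Rightarrow> 'a mat \<Rightarrow> 'a mat" (infixl "\<circ>\<^sub>h" 70) where
  "hadamard X Y = mat (dim_row X) (dim_col X) (\<lambda>ij. X $$ ij * Y $$ ij)"

definition msum :: "nat \<Rightarrow> nat \<Rightarrow> ('b \<Rightarrow> 'a::comm_monoid_add mat) \<Rightarrow> 'b set \<Rightarrow> 'a mat" where
  "msum nr nc F I = mat nr nc (\<lambda>ij. \<Sum>m\<in>I. F m $$ ij)"

text \<open>The coefficients c_{i,j} (i,j >= 1): c_{i,1} = 1/(i+1) and
 c_{i-1,j} = j/i * c_{i,j-1}, i.e. c_{i,j} = j/(i+1) * c_{i+1,j-1} for j >= 2.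
 The value at j = 0 is irrelevant.\<close>
fun ccoef :: "nat \<Rightarrow> nat \<Rightarrow> real" where
  "ccoef i 0 = 0"
| "ccoef i (Suc 0) = 1 / real (i + 1)"
| "ccoef i (Suc (Suc j)) = real (Suc (Suc j)) / real (i + 1) * ccoef (i + 1) (Suc j)"

definition Mfun :: "nat \<Rightarrow> nat \<Rightarrow> (nat \<Rightarrow> complex \<Rightarrow> complex) \<Rightarrow> (nat \<Rightarrow> complex mat) \<Rightarrow> complex \<Rightarrow> complex mat" where
  "Mfun n p f A x = msum n n (\<lambda>m. f m x \<cdot>\<^sub>m A m) {1..p}"

definition Mder :: "nat \<Rightarrow> nat \<Rightarrow> (nat \<Rightarrow> complex \<Rightarrow> complex) \<Rightarrow> (nat \<Rightarrow> complex mat) \<Rightarrow> nat \<Rightarrow> complex mat" where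
  "Mder n p f A j = msum n n (\<lambda>m. (deriv ^^ j) (f m) 0 \<cdot>\<^sub>m A m) {1..p}"

definition S_blk :: "nat \<Rightarrow> (nat \<Rightarrow> complex mat) \<Rightarrow> nat \<Rightarrow> nat \<Rightarrow> complex mat" where
  "S_blk n Md i j =
     (if i = 1 \<and> j = 1 then 1\<^sub>m n
      else if i = 1 \<or> j = 1 then 0\<^sub>m n n
      else complex_of_real (ccoef (i - 1) (j - 1)) \<cdot>\<^sub>m Md (i + j - 2))"

definition A_blk :: "nat \<Rightarrow> (nat \<Rightarrow> complex mat) \<Rightarrow> nat \<Rightarrow> nat \<Rightarrow> complex mat" where
  "A_blk n Md i j =
     (if i = j then (if i = 1 then - Md 0 else 1\<^sub>m n) else 0\<^sub>m n n)"

definition B_blk :: "nat \<Rightarrow> (nat \<Rightarrow> complex mat) \<Rightarrow> nat \<Rightarrow> nat \<Rightarrow> complex mat" where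
  "B_blk n Md i j =
     (if i = 1 then complex_of_real (1 / real j) \<cdot>\<^sub>m Md j
      else if i = j + 1 then complex_of_real (1 / real j) \<cdot>\<^sub>m 1\<^sub>m n
      else 0\<^sub>m n n)"

text \<open>G_{k+1} (0-based JNF indices a,b correspond to paper indices a+1,b+1).\<close>
definition Gmat :: "nat \<Rightarrow> complex mat" where
  "Gmat K = mat K K (\<lambda>(a, b). let i = a + 1; j = b + 1 in
     if i = 1 then complex_of_real (1 / real j)
     else if j = 1 then complex_of_real (1 / real i)
     else complex_of_real (ccoef (i - 1) j / real j))"

definition Fmat :: "nat \<Rightarrow> (complex \<Rightarrow> complex) \<Rightarrow> complex mat" where
  "Fmat K g = mat K K (\<lambda>(a, b). (deriv ^^ ((a + 1) + (b + 1) - 1)) g 0)"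

definition block_cols :: "nat \<Rightarrow> nat \<Rightarrow> complex vec \<Rightarrow> complex mat" where
  "block_cols n K v = mat n K (\<lambda>(a, b). v $ (b * n + a))"

end

theory Submission
  imports Defs
begin

text \<open>
  The matrix \<open>[S A]\<^sub>N\<close> is block diagonal, \<open>diag(-M\<^sub>0, T)\<close> with \<open>T\<close> the trailing
  \<open>(N - 1) \<times> (N - 1)\<close> block part of \<open>[S]\<^sub>N\<close>. Since the last block of \<open>q\<^sub>k\<close> vanishes, the lower
  block rows of \<open>[S B]\<^sub>N q\<^sub>k\<close> are \<open>T\<close> applied to the lower blocks of \<open>B q\<^sub>k\<close>, which are the blocks
  of \<open>q\<^sub>k\<close> moved down by one, block \<open>j\<close> divided by \<open>j\<close>. Hence \<open>w\<close> agrees with this shifted vector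
  outside its first block and vanishes beyond block \<open>k + 1\<close>. By the closed form
  \<open>c\<^sub>i\<^sub>,\<^sub>j = i! j! / (i + j)!\<close>, block \<open>(i, j)\<close> of \<open>[S B]\<^sub>N\<close> is \<open>G\<^sub>i\<^sub>j M\<^sub>i\<^sub>+\<^sub>j\<^sub>-\<^sub>1\<close> with \<open>G\<close> symmetric,
  and expanding \<open>M\<^sub>d = \<Sum>\<^sub>m f\<^sub>m\<^sup>(\<^sup>d\<^sup>)(0) A\<^sub>m\<close> gives \<open>Z\<close>.\<close>

lemma sum_lessThan_mult_blocks:
  "(\<Sum>s<m * n. h s) = (\<Sum>j<m. \<Sum>b<n. h (j * n + b :: nat))"
proof -
  have "(\<Sum>s<m * n. h s) = (\<Sum>j<m. sum h {j * n..<j * n + n})"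
    by (rule sum.nat_group[symmetric])
  also have "\<dots> = (\<Sum>j<m. \<Sum>b<n. h (j * n + b))"
    using sum.shift_bounds_nat_ivl[of h 0 "_ * n" n]
    by (simp add: atLeast0LessThan add.commute)
  finally show ?thesis .
qed

lemma index_mult_mat_vec_sum:
  "A \<in> carrier_mat nr nc \<Longrightarrow> v \<in> carrier_vec nc \<Longrightarrow> i < nr \<Longrightarrow>
    (A *\<^sub>v v) $ i = (\<Sum>s<nc. A $$ (i, s) * v $ s)"
  by (auto simp: scalar_prod_def atLeast0LessThan intro!: sum.cong)

lemma index_mult_mat_sum:
  "A \<in> carrier_mat nr nc \<Longrightarrow> B \<in> carrier_mat nc nd \<Longrightarrow> i < nr \<Longrightarrow> j < nd \<Longrightarrow>
    (A * B) $$ (i, j) = (\<Sum>s<nc. A $$ (i, s) * B $$ (s, j))"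
  by (auto simp: scalar_prod_def atLeast0LessThan intro!: sum.cong)

lemma minv_inverts:
  fixes X :: "complex mat"
  assumes "invertible_mat X" "X \<in> carrier_mat d d"
  shows "minv X \<in> carrier_mat d d" "minv X * X = 1\<^sub>m d" "X * minv X = 1\<^sub>m d"
proof -
  obtain B where B: "X * B = 1\<^sub>m d" "B * X = 1\<^sub>m (dim_row B)"
    using assms unfolding invertible_mat_def inverts_mat_def by auto
  have "dim_col B = d"
    using arg_cong[OF B(1), of dim_col] by simp
  moreover have "dim_row B = d"
    using arg_cong[OF B(2), of dim_col] assms(2) by simp
  ultimately have "\<exists>B. B \<in> carrier_mat (dim_row X) (dim_row X) \<and> inverts_mat X B \<and> inverts_mat B X"
    using B assms(2) unfolding inverts_mat_def by auto
  then have "minv X \<in> carrier_mat (dim_row X) (dim_row X) \<and> inverts_mat X (minv X) \<and> inverts_mat (minv X) X"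
    unfolding minv_def by (rule someI_ex)
  then show "minv X \<in> carrier_mat d d" "minv X * X = 1\<^sub>m d" "X * minv X = 1\<^sub>m d"
    using assms(2) unfolding inverts_mat_def by auto
qed

lemma block_diagonal_lower_mult_vec_eq_0:
  fixes X :: "complex mat" and v :: "complex vec"
  assumes X: "invertible_mat X" "X \<in> carrier_mat d d" and v: "v \<in> carrier_vec d"
    and diag: "\<And>r s. r < d \<Longrightarrow> s < d \<Longrightarrow> (r < n) \<noteq> (s < n) \<Longrightarrow> X $$ (r, s) = 0"
    and lower: "\<And>r. n \<le> r \<Longrightarrow> r < d \<Longrightarrow> (X *\<^sub>v v) $ r = 0"
    and s: "n \<le> s" "s < d"
  shows "v $ s = 0"
proof -
  define u where "u = vec d (\<lambda>t. if t < n then 0 else v $ t)"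
  have u: "u \<in> carrier_vec d" by (simp add: u_def)
  have "X *\<^sub>v u = 0\<^sub>v d"
  proof (rule eq_vecI)
    fix r assume "r < dim_vec (0\<^sub>v d :: complex vec)"
    then have r: "r < d" by simp
    have "(X *\<^sub>v u) $ r = (\<Sum>t<d. X $$ (r, t) * u $ t)"
      using index_mult_mat_vec_sum[OF X(2) u r] .
    also have "\<dots> = (if r < n then 0 else (X *\<^sub>v v) $ r)"
    proof (cases "r < n")
      case True
      then show ?thesis
        using r diag by (auto simp: u_def intro!: sum.neutral)
    next
      case False
      then show ?thesis
        using r diag index_mult_mat_vec_sum[OF X(2) v r] by (auto simp: u_def intro!: sum.cong)
    qed
    finally show "(X *\<^sub>v u) $ r = 0\<^sub>v d $ r"
      using r lower by simp
  qed (use X in simp)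
  have "u = (minv X * X) *\<^sub>v u"
    using minv_inverts[OF X] u by simp
  also have "\<dots> = minv X *\<^sub>v (X *\<^sub>v u)"
    using assoc_mult_mat_vec[OF minv_inverts(1)[OF X] X(2) u] .
  also have "\<dots> = 0\<^sub>v d"
    unfolding \<open>X *\<^sub>v u = 0\<^sub>v d\<close> by (rule eq_vecI) (use minv_inverts(1)[OF X] in auto)
  finally have "u $ s = 0"
    using s by simp
  then show ?thesis
    using s by (simp add: u_def)
qed

lemma ccoef_eq_fact: "0 < j \<Longrightarrow> ccoef i j = fact i * fact j / fact (i + j)"
proof (induction j arbitrary: i rule: less_induct)
  case (less j)
  then consider "j = 1" | j' where "j = Suc (Suc j')"
    by (metis One_nat_def gr0_implies_Suc not0_implies_Suc)
  then show ?case
  proof cases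
    case 1
    have "fact (Suc i) = real (Suc i) * fact i"
      by (rule fact_Suc)
    then show ?thesis
      using 1 by simp
  next
    case 2
    then have "ccoef i j = real j / real (i + 1) * ccoef (i + 1) (Suc j')"
      by simp
    also have "\<dots> = real j / real (i + 1) * (fact (i + 1) * fact (Suc j') / fact (i + j))"
      using less.IH[of "Suc j'" "i + 1"] 2 by simp
    also have "\<dots> = fact i * fact j / fact (i + j)"
      using 2 by (simp add: field_simps fact_Suc del: of_nat_Suc)
    finally show ?thesis .
  qed
qed

lemma ccoef_Suc_div_commute: "ccoef i (Suc j) / Suc j = ccoef j (Suc i) / Suc i"
  by (simp add: ccoef_eq_fact field_simps fact_Suc del: of_nat_Suc)

text \<open>The closed form gives \<open>c\<^sub>0\<^sub>,\<^sub>j = 1\<close>, so the first row and column of \<open>G\<close> need no special case.\<close>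
lemma Gmat_index:
  "i < K \<Longrightarrow> j < K \<Longrightarrow>
    Gmat K $$ (i, j) = complex_of_real (ccoef i (Suc j) / real (Suc j))"
  using ccoef_Suc_div_commute[of 0 j] ccoef_Suc_div_commute[of 0 i]
  by (auto simp: Gmat_def simp del: of_real_divide)

lemma Gmat_symmetric: "i < K \<Longrightarrow> j < K \<Longrightarrow> Gmat K $$ (i, j) = Gmat K $$ (j, i)"
  by (simp add: Gmat_index ccoef_Suc_div_commute del: of_nat_Suc)

text \<open>The lower block rows of \<open>[B]\<^sub>N q\<close> when the last block of \<open>q\<close> vanishes.\<close>
definition block_shift :: "nat \<Rightarrow> complex vec \<Rightarrow> complex vec" where
  "block_shift n q = vec (dim_vec q) (\<lambda>s. if s < n then 0 else q $ (s - n) / of_nat (s div n))"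

lemma index_lead: "r < N * n \<Longrightarrow> s < N * n \<Longrightarrow> lead n N X $$ (r, s) = X r s"
  by (simp add: lead_def)

lemma lead_carrier: "lead n N X \<in> carrier_mat (N * n) (N * n)"
  by (simp add: lead_def)

lemma dim_lead [simp]: "dim_row (lead n N X) = N * n" "dim_col (lead n N X) = N * n"
  by (simp_all add: lead_def)

lemma div_mod_eq_iff: "l div n = s div n \<and> l mod n = s mod n \<longleftrightarrow> l = (s :: nat)"
  by (metis div_mult_mod_eq)

context
  fixes n :: nat and Md :: "nat \<Rightarrow> complex mat"
  assumes n_pos: "0 < n" and Md_carrier: "\<And>j. Md j \<in> carrier_mat n n"
begin

abbreviation "S_inf \<equiv> blocks_to_imat n (S_blk n Md)"
abbreviation "A_inf \<equiv> blocks_to_imat n (A_blk n Md)"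
abbreviation "B_inf \<equiv> blocks_to_imat n (B_blk n Md)"

lemma S_inf_entry:
  "S_inf r s =
    (if r < n \<and> s < n then (if r = s then 1 else 0)
     else if r < n \<or> s < n then 0
     else of_real (ccoef (r div n) (s div n)) * Md (r div n + s div n) $$ (r mod n, s mod n))"
  using n_pos Md_carrier[THEN carrier_matD(1)] Md_carrier[THEN carrier_matD(2)]
  by (auto simp: blocks_to_imat_def S_blk_def div_eq_0_iff)

lemma A_inf_entry:
  "A_inf l s =
    (if s < n then (if l < n then - Md 0 $$ (l, s) else 0) else (if l = s then 1 else 0))"
  using n_pos Md_carrier[THEN carrier_matD(1)] Md_carrier[THEN carrier_matD(2)] div_mod_eq_iff[of l n s]
  by (auto simp: blocks_to_imat_def A_blk_def div_eq_0_iff)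

lemma B_inf_entry:
  "B_inf l s =
    (if l < n then of_real (1 / real (s div n + 1)) * Md (s div n + 1) $$ (l, s mod n)
     else if l = s + n then of_real (1 / real (s div n + 1)) else 0)"
  using n_pos Md_carrier[THEN carrier_matD(1)] Md_carrier[THEN carrier_matD(2)]
    div_mod_eq_iff[of l n "s + n"]
  by (auto simp: blocks_to_imat_def B_blk_def div_eq_0_iff)

lemma SA_inf_entry:
  "imat_mult S_inf A_inf r s = (if s < n then (if r < n then - Md 0 $$ (r, s) else 0) else S_inf r s)"
proof (cases "s < n")
  case True
  have "imat_mult S_inf A_inf r s = (\<Sum>l<n. S_inf r l * A_inf l s)"
    unfolding imat_mult_def using True
    by (intro infsumI has_sum_finite_neutralI[where B = "{..<n}"]) (auto simp: A_inf_entry)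
  also have "\<dots> = (\<Sum>l<n. if l = r then - Md 0 $$ (r, s) else 0)"
    by (rule sum.cong) (use True in \<open>auto simp: S_inf_entry A_inf_entry\<close>)
  finally show ?thesis
    using True by simp
next
  case False
  have "imat_mult S_inf A_inf r s = (\<Sum>l\<in>{s}. S_inf r l * A_inf l s)"
    unfolding imat_mult_def using False
    by (intro infsumI has_sum_finite_neutralI[where B = "{s}"]) (auto simp: A_inf_entry)
  then show ?thesis
    using False by (simp add: A_inf_entry)
qed

lemma SB_inf_entry:
  "imat_mult S_inf B_inf r s =
    of_real (1 / real (s div n + 1)) * (if r < n then Md (s div n + 1) $$ (r, s mod n) else S_inf r (s + n))"
proof -
  have "imat_mult S_inf B_inf r s = (\<Sum>l\<in>insert (s + n) {..<n}. S_inf r l * B_inf l s)"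
    unfolding imat_mult_def
    by (intro infsumI has_sum_finite_neutralI[where B = "insert (s + n) {..<n}"]) (auto simp: B_inf_entry)
  also have "\<dots> = S_inf r (s + n) * B_inf (s + n) s + (\<Sum>l<n. S_inf r l * B_inf l s)"
    by simp
  also have "(\<Sum>l<n. S_inf r l * B_inf l s) = (\<Sum>l<n. if l = r then B_inf r s else 0)"
    by (rule sum.cong) (auto simp: S_inf_entry)
  finally show ?thesis
    by (cases "r < n") (simp_all add: S_inf_entry[of r "s + n"] B_inf_entry[of r s] B_inf_entry[of "s + n" s])
qed

lemma SA_inf_block_diagonal: "(r < n) \<noteq> (s < n) \<Longrightarrow> imat_mult S_inf A_inf r s = 0"
  by (auto simp: SA_inf_entry S_inf_entry)

text \<open>Block indices are 0-based here: block \<open>(i, j)\<close> is block \<open>(i + 1, j + 1)\<close> of the paper.\<close>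
lemma SB_inf_leading_block:
  assumes "a < n" "b < n"
  shows "imat_mult S_inf B_inf (i * n + a) (j * n + b) =
    of_real (ccoef i (Suc j) / real (Suc j)) * Md (i + j + 1) $$ (a, b)"
proof -
  have div_mod: "(i * n + a) div n = i" "(i * n + a) mod n = a"
    "(j * n + b) div n = j" "(j * n + b) mod n = b"
    "(j * n + b + n) div n = Suc j" "(j * n + b + n) mod n = b"
    using assms n_pos by auto
  show ?thesis
  proof (cases "i = 0")
    case True
    then show ?thesis
      using assms div_mod by (simp add: SB_inf_entry ccoef_eq_fact)
  next
    case False
    then have "n \<le> i * n"
      by simp
    then have "\<not> i * n + a < n"
      by linarith
    then show ?thesis
      using assms div_mod by (simp add: SB_inf_entry S_inf_entry algebra_simps)
  qed
qed

lemma lower_SB_mult_eq_SA_mult_block_shift: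
  fixes q :: "complex vec"
  assumes q: "q \<in> carrier_vec (N * n)" and last_block: "\<And>s. N * n \<le> s + n \<Longrightarrow> s < N * n \<Longrightarrow> q $ s = 0"
    and r: "n \<le> r" "r < N * n"
  shows "(lead n N (imat_mult S_inf B_inf) *\<^sub>v q) $ r =
    (lead n N (imat_mult S_inf A_inf) *\<^sub>v block_shift n q) $ r"
proof -
  define M where "M = N * n - n"
  have NM: "N * n = M + n"
    using r by (simp add: M_def)
  have y: "block_shift n q \<in> carrier_vec (N * n)"
    using q by (simp add: block_shift_def)
  have "(lead n N (imat_mult S_inf A_inf) *\<^sub>v block_shift n q) $ r =
      (\<Sum>s<N * n. imat_mult S_inf A_inf r s * block_shift n q $ s)"
    using index_mult_mat_vec_sum[OF lead_carrier y r(2)] r by (simp add: index_lead)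
  also have "\<dots> = (\<Sum>s\<in>{n..<M + n}. S_inf r s * block_shift n q $ s)"
    unfolding NM using r
    by (intro sum.mono_neutral_cong_right) (auto simp: SA_inf_entry block_shift_def)
  also have "\<dots> = (\<Sum>t<M. S_inf r (t + n) * block_shift n q $ (t + n))"
    using sum.shift_bounds_nat_ivl[of "\<lambda>s. S_inf r s * block_shift n q $ s" 0 n M]
    by (simp add: atLeast0LessThan)
  also have "\<dots> = (\<Sum>t<M. of_real (1 / real (t div n + 1)) * S_inf r (t + n) * q $ t)"
    using q n_pos NM by (intro sum.cong) (auto simp: block_shift_def)
  also have "\<dots> = (\<Sum>t<N * n. of_real (1 / real (t div n + 1)) * S_inf r (t + n) * q $ t)"
    using NM last_block by (intro sum.mono_neutral_left) auto
  also have "\<dots> = (lead n N (imat_mult S_inf B_inf) *\<^sub>v q) $ r"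
    using index_mult_mat_vec_sum[OF lead_carrier q r(2)] r
    by (auto simp: index_lead SB_inf_entry intro: sum.cong)
  finally show ?thesis ..
qed

lemma lower_solution_eq_block_shift:
  fixes q :: "complex vec"
  assumes inv: "invertible_mat (lead n N (imat_mult S_inf A_inf))"
    and q: "q \<in> carrier_vec (N * n)" and last_block: "\<And>s. N * n \<le> s + n \<Longrightarrow> s < N * n \<Longrightarrow> q $ s = 0"
    and s: "n \<le> s" "s < N * n"
  shows "(minv (lead n N (imat_mult S_inf A_inf)) *\<^sub>v (lead n N (imat_mult S_inf B_inf) *\<^sub>v q)) $ s =
    block_shift n q $ s"
proof -
  let ?SA = "lead n N (imat_mult S_inf A_inf)" and ?SB = "lead n N (imat_mult S_inf B_inf)"
  define w where "w = minv ?SA *\<^sub>v (?SB *\<^sub>v q)"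
  have SBq: "?SB *\<^sub>v q \<in> carrier_vec (N * n)"
    using mult_mat_vec_carrier[OF lead_carrier q] .
  have w: "w \<in> carrier_vec (N * n)"
    using minv_inverts(1)[OF inv lead_carrier] SBq by (simp add: w_def)
  have y: "block_shift n q \<in> carrier_vec (N * n)"
    using q by (simp add: block_shift_def)
  have "?SA *\<^sub>v w = (?SA * minv ?SA) *\<^sub>v (?SB *\<^sub>v q)"
    unfolding w_def using assoc_mult_mat_vec[OF lead_carrier minv_inverts(1)[OF inv lead_carrier] SBq]
    by simp
  also have "\<dots> = ?SB *\<^sub>v q"
    using minv_inverts(3)[OF inv lead_carrier] SBq by simp
  finally have "?SA *\<^sub>v w = ?SB *\<^sub>v q" .
  have "(w - block_shift n q) $ s = 0"
  proof (rule block_diagonal_lower_mult_vec_eq_0[OF inv lead_carrier])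
    show "w - block_shift n q \<in> carrier_vec (N * n)"
      using w y by simp
    show "?SA $$ (r, s') = 0" if "r < N * n" "s' < N * n" "(r < n) \<noteq> (s' < n)" for r s'
      using that SA_inf_block_diagonal by (simp add: index_lead)
    show "(?SA *\<^sub>v (w - block_shift n q)) $ r = 0" if "n \<le> r" "r < N * n" for r
      using lower_SB_mult_eq_SA_mult_block_shift[OF q last_block that] \<open>?SA *\<^sub>v w = ?SB *\<^sub>v q\<close> that
      by (simp add: mult_minus_distrib_mat_vec[OF lead_carrier w y])
  qed (use s in auto)
  then show ?thesis
    using w y s by (simp add: w_def)
qed

lemma solution_tail_eq_0:
  fixes q :: "complex vec"
  assumes inv: "invertible_mat (lead n N (imat_mult S_inf A_inf))" and kN: "k + 1 \<le> N"
    and q: "q \<in> carrier_vec (N * n)" and supp: "\<And>s. k * n \<le> s \<Longrightarrow> s < N * n \<Longrightarrow> q $ s = 0"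
    and s: "(k + 1) * n \<le> s" "s < N * n"
  shows "(minv (lead n N (imat_mult S_inf A_inf)) *\<^sub>v (lead n N (imat_mult S_inf B_inf) *\<^sub>v q)) $ s = 0"
proof -
  have "k * n + n \<le> N * n"
    using mult_le_mono1[OF kN, of n] by simp
  then have last_block: "q $ t = 0" if "N * n \<le> t + n" "t < N * n" for t
    using supp that by simp
  have "n \<le> s"
    using s(1) by simp
  then show ?thesis
    using lower_solution_eq_block_shift[OF inv q last_block _ s(2)] supp[of "s - n"] s q
    by (simp add: block_shift_def)
qed

lemma block_cols_SB_mult_index:
  fixes w :: "complex vec"
  assumes KN: "K \<le> N" and w: "w \<in> carrier_vec (N * n)"
    and tail: "\<And>s. K * n \<le> s \<Longrightarrow> s < N * n \<Longrightarrow> w $ s = 0"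
    and ai: "a < n" "i < K"
  shows "block_cols n K (lead n N (imat_mult S_inf B_inf) *\<^sub>v w) $$ (a, i) =
    (\<Sum>j<K. \<Sum>b<n. of_real (ccoef i (Suc j) / real (Suc j)) * Md (i + j + 1) $$ (a, b) * w $ (j * n + b))"
proof -
  have KnNn: "K * n \<le> N * n"
    using KN by simp
  have r: "i * n + a < N * n"
  proof -
    have "i * n + a < (i + 1) * n" using ai by simp
    also have "\<dots> \<le> N * n" using ai KN by (intro mult_le_mono1) simp
    finally show ?thesis .
  qed
  have "block_cols n K (lead n N (imat_mult S_inf B_inf) *\<^sub>v w) $$ (a, i) =
      (\<Sum>s<N * n. imat_mult S_inf B_inf (i * n + a) s * w $ s)"
    using index_mult_mat_vec_sum[OF lead_carrier w r] ai r
    by (simp add: block_cols_def index_lead)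
  also have "\<dots> = (\<Sum>s<K * n. imat_mult S_inf B_inf (i * n + a) s * w $ s)"
    using KnNn tail by (intro sum.mono_neutral_right) auto
  also have "\<dots> = (\<Sum>j<K. \<Sum>b<n. imat_mult S_inf B_inf (i * n + a) (j * n + b) * w $ (j * n + b))"
    by (rule sum_lessThan_mult_blocks)
  also have "\<dots> = (\<Sum>j<K. \<Sum>b<n. of_real (ccoef i (Suc j) / real (Suc j)) * Md (i + j + 1) $$ (a, b) * w $ (j * n + b))"
    using ai by (intro sum.cong refl) (simp add: SB_inf_leading_block)
  finally show ?thesis .
qed

end

lemma index_Mder:
  assumes "\<And>m. m \<in> {1..p} \<Longrightarrow> A m \<in> carrier_mat n n" "a < n" "b < n"
  shows "Mder n p f A d $$ (a, b) = (\<Sum>m\<in>{1..p}. (deriv ^^ d) (f m) 0 * A m $$ (a, b))"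
proof -
  have "dim_row (A m) = n" "dim_col (A m) = n" if "m \<in> {1..p}" for m
    using assms(1)[OF that] by auto
  then show ?thesis
    using assms(2,3) by (auto simp: Mder_def msum_def intro!: sum.cong)
qed

lemma index_msum_mult_Gmat_hadamard_Fmat:
  assumes A: "\<And>m. m \<in> {1..p} \<Longrightarrow> A m \<in> carrier_mat n n" and W: "W \<in> carrier_mat n K"
    and ai: "a < n" "i < K"
  shows "msum n K (\<lambda>m. A m * W * (Gmat K \<circ>\<^sub>h Fmat K (f m))) {1..p} $$ (a, i) =
    (\<Sum>j<K. \<Sum>b<n. Gmat K $$ (i, j) * Mder n p f A (i + j + 1) $$ (a, b) * W $$ (b, j))"
proof -
  have GF: "(Gmat K \<circ>\<^sub>h Fmat K g) $$ (j, i) = Gmat K $$ (i, j) * (deriv ^^ (i + j + 1)) g 0"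
    if "j < K" for j g
    using that ai Gmat_symmetric[of i K j] by (simp add: hadamard_def Gmat_def Fmat_def add.commute)
  have "(A m * W * (Gmat K \<circ>\<^sub>h Fmat K (f m))) $$ (a, i) =
      (\<Sum>j<K. \<Sum>b<n. Gmat K $$ (i, j) * ((deriv ^^ (i + j + 1)) (f m) 0 * A m $$ (a, b)) * W $$ (b, j))"
    if m: "m \<in> {1..p}" for m
  proof -
    have AW: "A m * W \<in> carrier_mat n K"
      using A[OF m] W by simp
    have "(A m * W * (Gmat K \<circ>\<^sub>h Fmat K (f m))) $$ (a, i) =
        (\<Sum>j<K. (A m * W) $$ (a, j) * (Gmat K \<circ>\<^sub>h Fmat K (f m)) $$ (j, i))"
      using index_mult_mat_sum[OF AW _ ai] by (simp add: hadamard_def Gmat_def)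
    also have "\<dots> = (\<Sum>j<K. (\<Sum>b<n. A m $$ (a, b) * W $$ (b, j)) * (Gmat K $$ (i, j) * (deriv ^^ (i + j + 1)) (f m) 0))"
      using index_mult_mat_sum[OF A[OF m] W ai(1)] GF by (intro sum.cong) auto
    finally show ?thesis
      by (simp add: sum_distrib_left sum_distrib_right algebra_simps)
  qed
  then have "msum n K (\<lambda>m. A m * W * (Gmat K \<circ>\<^sub>h Fmat K (f m))) {1..p} $$ (a, i) =
      (\<Sum>m\<in>{1..p}. \<Sum>j<K. \<Sum>b<n. Gmat K $$ (i, j) * ((deriv ^^ (i + j + 1)) (f m) 0 * A m $$ (a, b)) * W $$ (b, j))"
    using ai by (simp add: msum_def)
  also have "\<dots> = (\<Sum>j<K. \<Sum>b<n. \<Sum>m\<in>{1..p}. Gmat K $$ (i, j) * ((deriv ^^ (i + j + 1)) (f m) 0 * A m $$ (a, b)) * W $$ (b, j))"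
    by (subst sum.swap, subst (2) sum.swap) (rule refl)
  also have "\<dots> = (\<Sum>j<K. \<Sum>b<n. Gmat K $$ (i, j) * Mder n p f A (i + j + 1) $$ (a, b) * W $$ (b, j))"
    using index_Mder[OF A ai(1)] by (intro sum.cong refl) (simp add: sum_distrib_left sum_distrib_right)
  finally show ?thesis .
qed

theorem theorem4:
  fixes n p N k :: nat and R :: real
    and f :: "nat \<Rightarrow> complex \<Rightarrow> complex"
    and A :: "nat \<Rightarrow> complex mat"
    and q :: "complex vec"
  assumes R: "R > 0"
    and hol: "\<And>m. m \<in> {1..p} \<Longrightarrow> f m holomorphic_on ball 0 R"
    and Adim: "\<And>m. m \<in> {1..p} \<Longrightarrow> A m \<in> carrier_mat n n"
    and sym: "\<And>x. x \<in> ball 0 R \<Longrightarrow> transpose_mat (Mfun n p f A x) = Mfun n p f A x"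
    and kN: "k + 1 \<le> N"
    and invS: "invertible_mat (lead n (2 * N) (blocks_to_imat n (S_blk n (Mder n p f A))))"
    and invSA: "invertible_mat (lead n N (imat_mult (blocks_to_imat n (S_blk n (Mder n p f A)))
                                                   (blocks_to_imat n (A_blk n (Mder n p f A)))))"
    and qdim: "q \<in> carrier_vec (N * n)"
    and qsupp: "\<And>r. k * n \<le> r \<Longrightarrow> r < N * n \<Longrightarrow> q $ r = 0"
  shows
    "let Md = Mder n p f A;
         S = blocks_to_imat n (S_blk n Md);
         SA = lead n N (imat_mult S (blocks_to_imat n (A_blk n Md)));
         SB = lead n N (imat_mult S (blocks_to_imat n (B_blk n Md)));
         w = minv SA *\<^sub>v (SB *\<^sub>v q);
         W = block_cols n (k + 1) w;
         z = SB *\<^sub>v w;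
         Z = block_cols n (k + 1) z
     in (\<forall>r. (k + 1) * n \<le> r \<and> r < N * n \<longrightarrow> w $ r = 0) \<and>
        Z = msum n (k + 1) (\<lambda>m. A m * W * (Gmat (k + 1) \<circ>\<^sub>h Fmat (k + 1) (f m))) {1..p}"
proof (cases "n = 0")
  case True
  then show ?thesis
    unfolding Let_def by (auto intro!: eq_matI simp: block_cols_def msum_def)
next
  case False
  then have n: "0 < n"
    by simp
  let ?Md = "Mder n p f A"
  let ?SA = "lead n N (imat_mult (blocks_to_imat n (S_blk n ?Md)) (blocks_to_imat n (A_blk n ?Md)))"
  let ?SB = "lead n N (imat_mult (blocks_to_imat n (S_blk n ?Md)) (blocks_to_imat n (B_blk n ?Md)))"
  define w where "w = minv ?SA *\<^sub>v (?SB *\<^sub>v q)"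
  have Md: "?Md j \<in> carrier_mat n n" for j
    by (simp add: Mder_def msum_def)
  have w: "w \<in> carrier_vec (N * n)"
    unfolding w_def
    using mult_mat_vec_carrier[OF minv_inverts(1)[OF invSA lead_carrier] mult_mat_vec_carrier[OF lead_carrier qdim]] .
  have w_tail: "w $ s = 0" if "(k + 1) * n \<le> s" "s < N * n" for s
    unfolding w_def using solution_tail_eq_0[OF n Md invSA kN qdim qsupp that] .
  have "block_cols n (k + 1) (?SB *\<^sub>v w) =
      msum n (k + 1) (\<lambda>m. A m * block_cols n (k + 1) w * (Gmat (k + 1) \<circ>\<^sub>h Fmat (k + 1) (f m))) {1..p}"
    using block_cols_SB_mult_index[OF n Md kN w w_tail] index_msum_mult_Gmat_hadamard_Fmat[OF Adim]
    by (intro eq_matI) (auto simp: block_cols_def msum_def Gmat_index intro!: sum.cong)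
  then show ?thesis
    using w_tail unfolding w_def Let_def by blast
qed

end
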